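(* Let $E$ be a finite set and $\underline I=(I_\omega)_{\omega\in E}$ a family of non-empty finite sets. For causal orders $\Omega,\Omega'$ on $E$, $$\mathrm{ExtHist}(\Omega,\underline I)\cap\mathrm{ExtHist}(\Omega',\underline I)=\mathrm{ExtHist}(\Omega\vee\Omega',\underline I)\quad\text{and}\quad \mathrm{Hist}(\Omega,\underline I)\vee\mathrm{Hist}(\Omega',\underline I)=\mathrm{Hist}(\Omega\vee\Omega',\underline I).$$
   Context: A causal order $\Omega$ on $E$ is a preorder $\le_\Omega$; $\downarrow\omega=\{\xi:\xi\le_\Omega\omega\}$; $\Lambda(\Omega)$ is its set of lowersets. $\Omega\vee\Omega'$ is the order whose relation is the transitive closure of $\le_\Omega\cup\le_{\Omega'}$. Partial functions on $\underline I$: $f$ with $\mathrm{dom}(f)\subseteq E$, $f(\omega)\in I_\omega$. $\mathrm{Hist}(\Omega,\underline I)=\bigcup_{\xi\in E}\prod_{\omega\in\downarrow\xi}I_\omega$; $\mathrm{ExtHist}(\Omega,\underline I)=\bigcup_{U\in\Lambda(\Omega)}\prod_{\omega\in U}I_\omega$. Compatible = agreeing on common domain; compatible sets $\mathcal F$ have join $\bigvee\mathcal F$ (union). For a set $\Theta$, $\mathrm{Ext}(\Theta)=\{\bigvee\mathcal F:\emptyset\ne\mathcal F\subseteq\Theta\text{ compatible}\}$; for a set $W$, $\mathrm{Prime}(W)=\{w\in W:\text{for all compatible }\mathcal F\subseteq W,\ w=\bigvee\mathcal F\Rightarrow w\in\mathcal F\}$. The join of spaces of input histories is $\Theta\vee\Theta'=\mathrm{Prime}(\mathrm{Ext}(\Theta)\cap\mathrm{Ext}(\Theta'))$.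 *)

theory Defs
  imports Main
begin

text \<open>A causal order on E: a preorder, given as a relation R on E
  ((x,y) \<in> R means x \<le> y).\<close>
definition causal_order :: "'a set \<Rightarrow> ('a \<times> 'a) set \<Rightarrow> bool" where
  "causal_order E R \<longleftrightarrow> R \<subseteq> E \<times> E \<and> (\<forall>x\<in>E. (x, x) \<in> R) \<and> trans R"

definition order_join :: "('a \<times> 'a) set \<Rightarrow> ('a \<times> 'a) set \<Rightarrow> ('a \<times> 'a) set" where
  "order_join R R' = (R \<union> R')\<^sup>+"

definition down :: "('a \<times> 'a) set \<Rightarrow> 'a \<Rightarrow> 'a set" where
  "down R w = {x. (x, w) \<in> R}"

definition lowersets :: "'a set \<Rightarrow> ('a \<times> 'a) set \<Rightarrow> 'a set set" where
  "lowersets E R = {U. U \<subseteq> E \<and> (\<forall>w\<in>U. \<forall>x. (x, w) \<in> R \<longrightarrow> x \<in> U)}"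

definition prod_on :: "'a set \<Rightarrow> ('a \<Rightarrow> 'b set) \<Rightarrow> ('a \<rightharpoonup> 'b) set" where
  "prod_on U I = {f. dom f = U \<and> (\<forall>w\<in>U. the (f w) \<in> I w)}"

definition Hist :: "'a set \<Rightarrow> ('a \<times> 'a) set \<Rightarrow> ('a \<Rightarrow> 'b set) \<Rightarrow> ('a \<rightharpoonup> 'b) set" where
  "Hist E R I = (\<Union>x\<in>E. prod_on (down R x) I)"

definition ExtHist :: "'a set \<Rightarrow> ('a \<times> 'a) set \<Rightarrow> ('a \<Rightarrow> 'b set) \<Rightarrow> ('a \<rightharpoonup> 'b) set" where
  "ExtHist E R I = (\<Union>U\<in>lowersets E R. prod_on U I)"

definition compatible :: "('a \<rightharpoonup> 'b) set \<Rightarrow> bool" where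
  "compatible F \<longleftrightarrow> (\<forall>f\<in>F. \<forall>g\<in>F. \<forall>x\<in>dom f \<inter> dom g. f x = g x)"

text \<open>Join (union) of a set of partial functions (meaningful for compatible sets).\<close>
definition map_join :: "('a \<rightharpoonup> 'b) set \<Rightarrow> ('a \<rightharpoonup> 'b)" where
  "map_join F = (\<lambda>x. if \<exists>f\<in>F. x \<in> dom f then Some (THE y. \<exists>f\<in>F. f x = Some y) else None)"

definition Ext :: "('a \<rightharpoonup> 'b) set \<Rightarrow> ('a \<rightharpoonup> 'b) set" where
  "Ext \<Theta> = {map_join F | F. F \<noteq> {} \<and> F \<subseteq> \<Theta> \<and> compatible F}"

definition Prime :: "('a \<rightharpoonup> 'b) set \<Rightarrow> ('a \<rightharpoonup> 'b) set" where
  "Prime W = {w \<in> W. \<forall>F. F \<subseteq> W \<and> compatible F \<and> w = map_join F \<longrightarrow> w \<in> F}"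

definition hist_join :: "('a \<rightharpoonup> 'b) set \<Rightarrow> ('a \<rightharpoonup> 'b) set \<Rightarrow> ('a \<rightharpoonup> 'b) set" where
  "hist_join \<Theta> \<Theta>' = Prime (Ext \<Theta> \<inter> Ext \<Theta>')"

end

theory Submission
  imports Defs
begin

text \<open>A set is a lowerset of the join of two orders iff it is a lowerset of both, which gives
  the statement about extended histories. For the second statement, every extended history f with
  non-empty domain is the join of the compatible family of its restrictions to the sets
  \<open>\<down>x\<close>, \<open>x \<in> dom f\<close>, which are histories; hence \<open>Ext (Hist \<Omega>)\<close> consists of the extended
  histories with non-empty domain. Among these the prime ones are exactly the histories: a history
  on \<open>\<down>x\<close> that is the join of a compatible family has a member whose domain contains x, hence all
  of \<open>\<down>x\<close>, and that member is the history itself.\<close>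

lemma dom_map_join: "dom (map_join F) = (\<Union>g\<in>F. dom g)"
  unfolding map_join_def dom_def by auto

lemma map_join_eqI:
  assumes "compatible F" "g \<in> F" "g x = Some y"
  shows "map_join F x = Some y"
proof -
  have "(THE y. \<exists>f\<in>F. f x = Some y) = y"
  proof (rule the_equality)
    fix z assume "\<exists>f\<in>F. f x = Some z"
    then obtain f where "f \<in> F" "f x = Some z" by blast
    with assms show "z = y" unfolding compatible_def by (metis IntI domI option.inject)
  qed (use assms in blast)
  then show ?thesis using assms(2,3) unfolding map_join_def by auto
qed

lemma map_le_map_join: "compatible F \<Longrightarrow> g \<in> F \<Longrightarrow> g \<subseteq>\<^sub>m map_join F"
  unfolding map_le_def using map_join_eqI by fastforce

lemma compatible_if_map_le: "(\<And>g. g \<in> F \<Longrightarrow> g \<subseteq>\<^sub>m f) \<Longrightarrow> compatible F"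
  unfolding compatible_def map_le_def by (metis IntD1 IntD2)

lemma map_join_of_submaps:
  assumes sub: "\<And>g. g \<in> F \<Longrightarrow> g \<subseteq>\<^sub>m f" and cover: "dom f \<subseteq> (\<Union>g\<in>F. dom g)"
  shows "map_join F = f"
proof
  fix x
  show "map_join F x = f x"
  proof (cases "x \<in> dom f")
    case True
    then obtain g y where "g \<in> F" "g x = Some y" using cover by blast
    moreover from this have "f x = Some y" using sub unfolding map_le_def by (metis domI)
    ultimately show ?thesis using map_join_eqI compatible_if_map_le sub by metis
  next
    case False
    then have "x \<notin> dom (map_join F)"
      unfolding dom_map_join using sub map_le_implies_dom_le by blast
    with False show ?thesis by (simp add: domIff)
  qed
qed

lemma PrimeI:
  "w \<in> W \<Longrightarrow> (\<And>F. F \<subseteq> W \<Longrightarrow> compatible F \<Longrightarrow> w = map_join F \<Longrightarrow> w \<in> F) \<Longrightarrow> w \<in> Prime W"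
  unfolding Prime_def by blast

lemma PrimeD: "w \<in> Prime W \<Longrightarrow> F \<subseteq> W \<Longrightarrow> compatible F \<Longrightarrow> w = map_join F \<Longrightarrow> w \<in> F"
  unfolding Prime_def by blast

lemma down_in_lowersets: "causal_order E R \<Longrightarrow> x \<in> E \<Longrightarrow> down R x \<in> lowersets E R"
  unfolding causal_order_def lowersets_def down_def trans_def by blast

lemma mem_down_self: "causal_order E R \<Longrightarrow> x \<in> E \<Longrightarrow> x \<in> down R x"
  unfolding causal_order_def down_def by blast

lemma down_subset_lowerset: "U \<in> lowersets E R \<Longrightarrow> x \<in> U \<Longrightarrow> down R x \<subseteq> U"
  unfolding lowersets_def down_def by blast

lemma Union_in_lowersets: "S \<subseteq> lowersets E R \<Longrightarrow> \<Union>S \<in> lowersets E R"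
  unfolding lowersets_def by blast

lemma causal_order_order_join:
  assumes "causal_order E R" "causal_order E R'"
  shows "causal_order E (order_join R R')"
proof -
  have "R \<union> R' \<subseteq> E \<times> E" using assms unfolding causal_order_def by blast
  then have "(R \<union> R')\<^sup>+ \<subseteq> E \<times> E" using trancl_subset_Sigma by blast
  then show ?thesis using assms unfolding causal_order_def order_join_def by auto
qed

lemma lowersets_order_join: "lowersets E (order_join R R') = lowersets E R \<inter> lowersets E R'"
proof
  show "lowersets E (order_join R R') \<subseteq> lowersets E R \<inter> lowersets E R'"
    unfolding lowersets_def order_join_def by blast
  show "lowersets E R \<inter> lowersets E R' \<subseteq> lowersets E (order_join R R')"
  proof
    fix U assume U: "U \<in> lowersets E R \<inter> lowersets E R'"
    have "x \<in> U" if "(x, w) \<in> (R \<union> R')\<^sup>+" "w \<in> U" for x w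
      using that(1)
    proof (induction rule: converse_trancl_induct)
      case (base y)
      with U that(2) show ?case unfolding lowersets_def by blast
    next
      case (step y z)
      with U show ?case unfolding lowersets_def by blast
    qed
    with U show "U \<in> lowersets E (order_join R R')"
      unfolding lowersets_def order_join_def by blast
  qed
qed

lemma mem_ExtHist_iff:
  "f \<in> ExtHist E R I \<longleftrightarrow> dom f \<in> lowersets E R \<and> (\<forall>w\<in>dom f. the (f w) \<in> I w)"
  unfolding ExtHist_def prod_on_def by auto

lemma mem_Hist_iff:
  "f \<in> Hist E R I \<longleftrightarrow> (\<exists>x\<in>E. dom f = down R x) \<and> (\<forall>w\<in>dom f. the (f w) \<in> I w)"
  unfolding Hist_def prod_on_def by auto

lemma ExtHist_Int_ExtHist: "ExtHist E R I \<inter> ExtHist E R' I = ExtHist E (order_join R R') I"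
  by (auto simp: mem_ExtHist_iff lowersets_order_join)

lemma Hist_subset_ExtHist:
  assumes co: "causal_order E R"
  shows "Hist E R I \<subseteq> {f \<in> ExtHist E R I. dom f \<noteq> {}}"
proof
  fix f assume "f \<in> Hist E R I"
  then obtain x where "x \<in> E" "dom f = down R x" "\<forall>w\<in>dom f. the (f w) \<in> I w"
    unfolding mem_Hist_iff by blast
  with down_in_lowersets[OF co] mem_down_self[OF co] show "f \<in> {f \<in> ExtHist E R I. dom f \<noteq> {}}"
    unfolding mem_ExtHist_iff by auto
qed

lemma map_join_in_ExtHist:
  assumes "F \<subseteq> ExtHist E R I" "compatible F"
  shows "map_join F \<in> ExtHist E R I"
  unfolding mem_ExtHist_iff
proof
  show "dom (map_join F) \<in> lowersets E R"
    using assms(1) unfolding dom_map_join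
    by (intro Union_in_lowersets) (auto simp: mem_ExtHist_iff)
  show "\<forall>w\<in>dom (map_join F). the (map_join F w) \<in> I w"
  proof
    fix w assume "w \<in> dom (map_join F)"
    then obtain g y where g: "g \<in> F" "g w = Some y" unfolding dom_map_join by blast
    have "g \<in> ExtHist E R I" using g(1) assms(1) by blast
    with g(2) have "the (g w) \<in> I w" unfolding mem_ExtHist_iff by (metis domI)
    then show "the (map_join F w) \<in> I w" using map_join_eqI[OF assms(2) g] g(2) by simp
  qed
qed

lemma ExtHist_join_of_restrictions:
  assumes co: "causal_order E R" and f: "f \<in> ExtHist E R I"
  defines "F \<equiv> {f |` down R x | x. x \<in> dom f}"
  shows "F \<subseteq> Hist E R I" and "compatible F" and "map_join F = f"
proof -
  have low: "dom f \<in> lowersets E R" and val: "\<forall>w\<in>dom f. the (f w) \<in> I w"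
    using f by (auto simp: mem_ExtHist_iff)
  have "dom f \<subseteq> E" using low unfolding lowersets_def by blast
  then have self: "x \<in> down R x" if "x \<in> dom f" for x using mem_down_self[OF co] that by blast
  have sub: "g \<subseteq>\<^sub>m f" if "g \<in> F" for g
    using that unfolding F_def map_le_def by (auto simp: restrict_map_def split: if_splits)
  show "compatible F" using sub by (rule compatible_if_map_le)
  have "dom f \<subseteq> (\<Union>g\<in>F. dom g)"
  proof
    fix x assume "x \<in> dom f"
    then have "f |` down R x \<in> F" "x \<in> dom (f |` down R x)" using self unfolding F_def by auto
    then show "x \<in> (\<Union>g\<in>F. dom g)" by blast
  qed
  with sub show "map_join F = f" by (rule map_join_of_submaps)
  show "F \<subseteq> Hist E R I"
  proof
    fix g assume "g \<in> F"
    then obtain x where x: "x \<in> dom f" "g = f |` down R x" unfolding F_def by blast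
    have "down R x \<subseteq> dom f" using down_subset_lowerset[OF low x(1)] .
    then have "dom g = down R x" using x(2) by auto
    moreover have "\<forall>w\<in>dom g. the (g w) \<in> I w"
      using val x(2) \<open>dom g = down R x\<close> \<open>down R x \<subseteq> dom f\<close> by auto
    ultimately show "g \<in> Hist E R I" unfolding mem_Hist_iff using x(1) \<open>dom f \<subseteq> E\<close> by blast
  qed
qed

lemma Ext_Hist:
  assumes co: "causal_order E R"
  shows "Ext (Hist E R I) = {f \<in> ExtHist E R I. dom f \<noteq> {}}"
proof (intro equalityI subsetI)
  fix f assume "f \<in> Ext (Hist E R I)"
  then obtain F where F: "f = map_join F" "F \<noteq> {}" "F \<subseteq> Hist E R I" "compatible F"
    unfolding Ext_def by blast
  have W: "F \<subseteq> {f \<in> ExtHist E R I. dom f \<noteq> {}}"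
    using F(3) Hist_subset_ExtHist[OF co] by (rule subset_trans)
  then have "F \<subseteq> ExtHist E R I" by blast
  then have "f \<in> ExtHist E R I" unfolding F(1) using F(4) by (rule map_join_in_ExtHist)
  moreover obtain g where "g \<in> F" using F(2) by blast
  with W have "dom f \<noteq> {}" unfolding F(1) dom_map_join by blast
  ultimately show "f \<in> {f \<in> ExtHist E R I. dom f \<noteq> {}}" by blast
next
  fix f assume "f \<in> {f \<in> ExtHist E R I. dom f \<noteq> {}}"
  then have f: "f \<in> ExtHist E R I" and ne: "dom f \<noteq> {}" by blast+
  let ?F = "{f |` down R x | x. x \<in> dom f}"
  have "?F \<noteq> {}" using ne by blast
  with ExtHist_join_of_restrictions[OF co f] show "f \<in> Ext (Hist E R I)"
    unfolding Ext_def mem_Collect_eq by (intro exI[of _ ?F]) simp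
qed

lemma Prime_ExtHist:
  assumes co: "causal_order E R"
  shows "Prime {f \<in> ExtHist E R I. dom f \<noteq> {}} = Hist E R I"
proof (intro equalityI subsetI)
  fix f assume prime: "f \<in> Prime {f \<in> ExtHist E R I. dom f \<noteq> {}}"
  let ?F = "{f |` down R x | x. x \<in> dom f}"
  have "f \<in> ExtHist E R I" using prime unfolding Prime_def by blast
  note F = ExtHist_join_of_restrictions[OF co this]
  have "?F \<subseteq> {f \<in> ExtHist E R I. dom f \<noteq> {}}"
    using F(1) Hist_subset_ExtHist[OF co] by (rule subset_trans)
  from prime this F(2) F(3)[symmetric] have "f \<in> ?F" by (rule PrimeD)
  with F(1) show "f \<in> Hist E R I" by blast
next
  fix f assume f: "f \<in> Hist E R I"
  then obtain x where x: "x \<in> E" "dom f = down R x" unfolding mem_Hist_iff by blast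
  show "f \<in> Prime {f \<in> ExtHist E R I. dom f \<noteq> {}}"
  proof (rule PrimeI)
    show "f \<in> {f \<in> ExtHist E R I. dom f \<noteq> {}}" using f Hist_subset_ExtHist[OF co] by blast
  next
    fix F assume F: "F \<subseteq> {f \<in> ExtHist E R I. dom f \<noteq> {}}" "compatible F" "f = map_join F"
    have "x \<in> dom (map_join F)" using x mem_down_self[OF co] F(3) by simp
    then obtain g where g: "g \<in> F" "x \<in> dom g" unfolding dom_map_join by blast
    then have "dom g \<in> lowersets E R" using F(1) by (auto simp: mem_ExtHist_iff)
    then have "dom f \<subseteq> dom g" using x(2) g(2) by (simp add: down_subset_lowerset)
    moreover have "g \<subseteq>\<^sub>m f" using map_le_map_join[OF F(2) g(1)] F(3) by simp
    ultimately have "f \<subseteq>\<^sub>m g" unfolding map_le_def by (metis subsetD)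
    with \<open>g \<subseteq>\<^sub>m f\<close> have "g = f" by (rule map_le_antisym)
    with g(1) show "f \<in> F" by simp
  qed
qed

theorem proposition8:
  fixes E :: "'a set" and I :: "'a \<Rightarrow> 'b set" and R R' :: "('a \<times> 'a) set"
  assumes "finite E"
    and "\<And>w. w \<in> E \<Longrightarrow> I w \<noteq> {} \<and> finite (I w)"
    and "causal_order E R" and "causal_order E R'"
  shows "ExtHist E R I \<inter> ExtHist E R' I = ExtHist E (order_join R R') I
         \<and> hist_join (Hist E R I) (Hist E R' I) = Hist E (order_join R R') I"
proof
  show ExtHist_join: "ExtHist E R I \<inter> ExtHist E R' I = ExtHist E (order_join R R') I"
    by (rule ExtHist_Int_ExtHist)
  have "Ext (Hist E R I) \<inter> Ext (Hist E R' I)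
      = {f \<in> ExtHist E (order_join R R') I. dom f \<noteq> {}}"
    unfolding Ext_Hist[OF assms(3)] Ext_Hist[OF assms(4)] ExtHist_join[symmetric] by blast
  then show "hist_join (Hist E R I) (Hist E R' I) = Hist E (order_join R R') I"
    unfolding hist_join_def using Prime_ExtHist[OF causal_order_order_join[OF assms(3,4)]] by simp
qed

end
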